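(* Let $B$ be a commutative ring with identity and $A$ a subring of $B$ containing the identity. Then $A$ is a dense subring of $B$ if and only if the map $i^*:\operatorname{spec} B\to\operatorname{spec} A$, $i^*(P)=P\cap A$, is a topological embedding with dense image.
   Context: All rings are commutative with identity; subrings contain the identity. $\operatorname{spec} R$ denotes the set of prime ideals of $R$ with the Zariski topology. A subring $A$ of a ring $B$ is called a dense subring of $B$ if for every ideal $I$ of $B$ and every $b\in B$ with $b\notin \operatorname{rad}(I)$, there exists $a\in B$ with $a\notin \operatorname{rad}(I)$ such that $ab\in A$. *)

theory Defs
  imports "HOL-Analysis.Analysis" "HOL-Algebra.Algebra"
begin

definition Spec :: "('a, 'm) ring_scheme \<Rightarrow> 'a set set"
  where "Spec R = {P. primeideal P R}"

definition zariski_open :: "('a, 'm) ring_scheme \<Rightarrow> 'a set set \<Rightarrow> bool"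
  where "zariski_open R U \<longleftrightarrow> (\<exists>S \<subseteq> carrier R. U = Spec R - {P \<in> Spec R. S \<subseteq> P})"

lemma istopology_zariski: "istopology (zariski_open R)"
  unfolding istopology_def
proof (intro conjI allI impI)
  fix U V assume U: "zariski_open R U" and V: "zariski_open R V"
  then obtain S T where S: "S \<subseteq> carrier R" "U = Spec R - {P \<in> Spec R. S \<subseteq> P}"
    and T: "T \<subseteq> carrier R" "V = Spec R - {P \<in> Spec R. T \<subseteq> P}"
    by (auto simp: zariski_open_def)
  define W where "W = {s \<otimes>\<^bsub>R\<^esub> t | s t. s \<in> S \<and> t \<in> T \<and> s \<otimes>\<^bsub>R\<^esub> t \<in> carrier R}"
  have "U \<inter> V = Spec R - {P \<in> Spec R. W \<subseteq> P}"
  proof (intro equalityI subsetI)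
    fix P assume P: "P \<in> U \<inter> V"
    then have pi: "primeideal P R" by (auto simp: S T Spec_def)
    obtain s t where "s \<in> S" "s \<notin> P" "t \<in> T" "t \<notin> P" using P S T by auto
    then have "s \<otimes>\<^bsub>R\<^esub> t \<notin> P" using primeideal.I_prime[OF pi] S T by blast
    moreover have "s \<otimes>\<^bsub>R\<^esub> t \<in> carrier R"
    proof -
      interpret primeideal P R by (fact pi)
      show ?thesis using \<open>s \<in> S\<close> \<open>t \<in> T\<close> S(1) T(1) by (meson m_closed subsetD)
    qed
    ultimately show "P \<in> Spec R - {P \<in> Spec R. W \<subseteq> P}" using P \<open>s \<in> S\<close> \<open>t \<in> T\<close> S
      by (auto simp: W_def)
  next
    fix P assume P: "P \<in> Spec R - {P \<in> Spec R. W \<subseteq> P}"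
    then have pi: "primeideal P R" by (auto simp: Spec_def)
    then interpret primeideal P R .
    obtain s t where st: "s \<in> S" "t \<in> T" "s \<otimes>\<^bsub>R\<^esub> t \<notin> P" using P by (auto simp: W_def)
    have sc: "s \<in> carrier R" "t \<in> carrier R" using st S(1) T(1) by auto
    have "s \<notin> P" using st(3) sc I_r_closed by metis
    moreover have "t \<notin> P" using st(3) sc I_l_closed by metis
    ultimately show "P \<in> U \<inter> V" using P st unfolding S(2) T(2) by blast
  qed
  moreover have "W \<subseteq> carrier R" by (auto simp: W_def)
  ultimately show "zariski_open R (U \<inter> V)" unfolding zariski_open_def
    by (intro exI[of _ W] conjI) simp_all
next
  fix K assume K: "\<forall>U\<in>K. zariski_open R U"
  define Sf where "Sf U = (SOME S. S \<subseteq> carrier R \<and> U = Spec R - {P \<in> Spec R. S \<subseteq> P})" for U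
  have Sf: "Sf U \<subseteq> carrier R \<and> U = Spec R - {P \<in> Spec R. Sf U \<subseteq> P}" if "U \<in> K" for U
  proof -
    have "zariski_open R U" using K that by blast
    then show ?thesis unfolding Sf_def zariski_open_def by (rule someI_ex)
  qed
  have E: "\<Union>K = Spec R - {P \<in> Spec R. (\<Union>U\<in>K. Sf U) \<subseteq> P}"
  proof (intro equalityI subsetI)
    fix P assume "P \<in> \<Union>K"
    then obtain U where "U \<in> K" "P \<in> U" by auto
    then have "P \<in> Spec R" "\<not> Sf U \<subseteq> P" using Sf[of U] by auto
    then show "P \<in> Spec R - {P \<in> Spec R. (\<Union>U\<in>K. Sf U) \<subseteq> P}" using \<open>U \<in> K\<close> by auto
  next
    fix P assume "P \<in> Spec R - {P \<in> Spec R. (\<Union>U\<in>K. Sf U) \<subseteq> P}"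
    then obtain U where "U \<in> K" "\<not> Sf U \<subseteq> P" "P \<in> Spec R" by auto
    then have "P \<in> U" using Sf[of U] by auto
    then show "P \<in> \<Union>K" using \<open>U \<in> K\<close> by auto
  qed
  have C: "(\<Union>U\<in>K. Sf U) \<subseteq> carrier R" using Sf by auto
  show "zariski_open R (\<Union>K)" unfolding zariski_open_def
    by (rule exI[of _ "\<Union>U\<in>K. Sf U"], rule conjI[OF C E])
qed

definition Zariski :: "('a, 'm) ring_scheme \<Rightarrow> 'a set topology"
  where "Zariski R = topology (zariski_open R)"

lemma openin_Zariski: "openin (Zariski R) = zariski_open R"
  unfolding Zariski_def by (rule topology_inverse'[OF istopology_zariski])

definition rad :: "('a, 'm) ring_scheme \<Rightarrow> 'a set \<Rightarrow> 'a set"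
  where "rad R I = {x \<in> carrier R. \<exists>n::nat. x [^]\<^bsub>R\<^esub> n \<in> I}"

definition dense_subring :: "'a set \<Rightarrow> ('a, 'm) ring_scheme \<Rightarrow> bool"
  where "dense_subring A B \<longleftrightarrow>
    (\<forall>I b. ideal I B \<longrightarrow> b \<in> carrier B \<longrightarrow> b \<notin> rad B I \<longrightarrow>
       (\<exists>a \<in> carrier B. a \<notin> rad B I \<and> a \<otimes>\<^bsub>B\<^esub> b \<in> A))"

end

theory Submission
  imports Defs
begin

text \<open>
  Contraction P \<mapsto> P \<inter> A is always continuous, and its image is dense: an element of A
  outside some prime of A is not nilpotent, so by Krull's argument it avoids some prime of B.
  If A is dense, a prime Q of B contains T \<subseteq> B iff it contains A \<inter> BT; hence contraction is
  injective and maps the basic open set D(T) onto D(A \<inter> BT) intersected with its image, so it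
  is an embedding. Conversely, given an ideal I and b \<notin> rad I, pick a prime P \<supseteq> I with b \<notin> P.
  The image of D(b) is cut out by some D(S) with S \<subseteq> A, so some s \<in> S avoids P; by
  injectivity s lies in every prime containing b, so s^n = cb, and c \<notin> rad I because c \<notin> P.
\<close>

lemma embedding_mapI:
  assumes "continuous_map S T f" and "inj_on f (topspace S)"
    and "\<And>U. openin S U \<Longrightarrow> \<exists>V. openin T V \<and> f ` U = V \<inter> f ` topspace S"
  shows "embedding_map S T f"
  unfolding embedding_map_def
proof (rule bijective_open_imp_homeomorphic_map)
  show "continuous_map S (subtopology T (f ` topspace S)) f"
    using assms(1) by (simp add: continuous_map_in_subtopology)
  show "open_map S (subtopology T (f ` topspace S)) f"
    using assms(3) by (auto simp: open_map_def openin_subtopology)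
qed (use assms(2) continuous_map_image_subset_topspace[OF assms(1)] in auto)

lemma embedding_map_imp_inj_on: "embedding_map S T f \<Longrightarrow> inj_on f (topspace S)"
  by (simp add: embedding_map_def homeomorphic_map_def)

lemma embedding_map_imp_open_image:
  assumes "embedding_map S T f" and "openin S U"
  obtains V where "openin T V" "f ` U = V \<inter> f ` topspace S"
proof -
  have "openin (subtopology T (f ` topspace S)) (f ` U)"
    using assms homeomorphic_map_openness openin_subset unfolding embedding_map_def by blast
  then show ?thesis using that by (auto simp: openin_subtopology)
qed

lemma (in cring) colon_is_ideal:
  assumes "ideal M R" and "c \<in> carrier R"
  shows "ideal {y \<in> carrier R. y \<otimes> c \<in> M} R"
proof -
  interpret ideal M R by (fact assms(1))
  show ?thesis
  proof (intro idealI ring_axioms subgroup.intro)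
    fix x y assume "x \<in> {y \<in> carrier R. y \<otimes> c \<in> M}" "y \<in> {y \<in> carrier R. y \<otimes> c \<in> M}"
    then show "x \<otimes>\<^bsub>add_monoid R\<^esub> y \<in> {y \<in> carrier R. y \<otimes> c \<in> M}"
      using assms(2) by (simp add: l_distr)
  next
    fix x assume "x \<in> {y \<in> carrier R. y \<otimes> c \<in> M}"
    then show "inv\<^bsub>add_monoid R\<^esub> x \<in> {y \<in> carrier R. y \<otimes> c \<in> M}"
      using assms(2) by (simp add: a_inv_def[symmetric] l_minus)
  next
    fix a x assume "a \<in> {y \<in> carrier R. y \<otimes> c \<in> M}" "x \<in> carrier R"
    then show "x \<otimes> a \<in> {y \<in> carrier R. y \<otimes> c \<in> M}" "a \<otimes> x \<in> {y \<in> carrier R. y \<otimes> c \<in> M}"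
      using assms(2) by (simp_all add: m_comm[of a x] m_assoc I_l_closed)
  qed (use assms(2) in auto)
qed

lemma (in cring) exists_primeideal_avoiding_powers:
  assumes I: "ideal I R" and x: "x \<in> carrier R" and powers: "\<And>n::nat. x [^] n \<notin> I"
  obtains P where "primeideal P R" "I \<subseteq> P" "x \<notin> P"
proof -
  define F where "F = {J. ideal J R \<and> I \<subseteq> J \<and> (\<forall>n::nat. x [^] n \<notin> J)}"
  have "\<exists>M\<in>F. \<forall>J\<in>F. M \<subseteq> J \<longrightarrow> J = M"
  proof (rule subset_Zorn_nonempty)
    show "F \<noteq> {}" using I powers unfolding F_def by blast
    fix C assume C: "C \<noteq> {}" "subset.chain F C"
    then have "subset.chain {J. ideal J R} C"
      by (auto simp: F_def pred_on.chain_def)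
    then have "ideal (\<Union>C) R"
      using chain_Union_is_ideal[of C] C(1) by simp
    with C show "\<Union>C \<in> F"
      unfolding F_def pred_on.chain_def by blast
  qed
  then obtain M where "M \<in> F" and M_max: "\<And>J. J \<in> F \<Longrightarrow> M \<subseteq> J \<Longrightarrow> J = M"
    by blast
  then have M: "ideal M R" "I \<subseteq> M" "\<And>n::nat. x [^] n \<notin> M"
    unfolding F_def by auto
  interpret M: ideal M R by (fact M(1))
  \<comment> \<open>By maximality, the colon ideal of M by c meets the powers of x as soon as it exceeds M.\<close>
  have colon: "\<exists>n::nat. x [^] n \<otimes> c \<in> M"
    if "c \<in> carrier R" "a \<in> carrier R" "a \<notin> M" "a \<otimes> c \<in> M" for a c
  proof (rule ccontr)
    let ?J = "{y \<in> carrier R. y \<otimes> c \<in> M}"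
    assume "\<not> (\<exists>n::nat. x [^] n \<otimes> c \<in> M)"
    moreover have "M \<subseteq> ?J" using that(1) M.I_r_closed M.a_subset by blast
    ultimately have "?J \<in> F"
      unfolding F_def using colon_is_ideal[OF M(1) that(1)] M(2) by blast
    then show False using M_max \<open>M \<subseteq> ?J\<close> that(2-4) by blast
  qed
  have "primeideal M R"
  proof (rule primeidealI[OF M(1) is_cring])
    show "carrier R \<noteq> M" using M(3)[of 0] by auto
    fix a b assume a: "a \<in> carrier R" and b: "b \<in> carrier R" and "a \<otimes> b \<in> M"
    show "a \<in> M \<or> b \<in> M"
    proof (rule ccontr)
      assume "\<not> (a \<in> M \<or> b \<in> M)"
      then obtain n :: nat where n: "x [^] n \<otimes> b \<in> M"
        using colon[OF b a] \<open>a \<otimes> b \<in> M\<close> by blast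
      then obtain k :: nat where "x [^] k \<otimes> x [^] n \<in> M"
        using colon[of "x [^] n" b] \<open>\<not> (a \<in> M \<or> b \<in> M)\<close> b x by (auto simp: m_comm)
      then show False using M(3)[of "k + n"] x by (simp add: nat_pow_mult)
    qed
  qed
  moreover have "x \<notin> M" using M(3)[of 1] x by simp
  ultimately show thesis using that M(2) by blast
qed

lemma (in primeideal) nat_pow_mem_imp_mem:
  assumes "x \<in> carrier R" and "x [^] (n::nat) \<in> I"
  shows "x \<in> I"
  using assms(2)
proof (induction n)
  case 0
  then show ?case using one_imp_carrier I_notcarr by simp
next
  case (Suc n)
  then show ?case using I_prime[of "x [^] n" x] assms(1) by auto
qed

lemma (in primeideal) rad_eq: "rad R I = I"
proof
  show "rad R I \<subseteq> I"
    using nat_pow_mem_imp_mem unfolding rad_def by blast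
  have "x [^] (1::nat) \<in> I" if "x \<in> I" for x
    using that a_subset by auto
  then show "I \<subseteq> rad R I"
    using a_subset unfolding rad_def by blast
qed

lemma (in cring) exists_Spec_not_in_rad:
  assumes "ideal I R" and "x \<in> carrier R" and "x \<notin> rad R I"
  obtains P where "P \<in> Spec R" "I \<subseteq> P" "x \<notin> P"
  using exists_primeideal_avoiding_powers[OF assms(1,2)] assms(2,3)
  unfolding rad_def Spec_def by blast

lemma Spec_subset_carrier: "P \<in> Spec R \<Longrightarrow> P \<subseteq> carrier R"
  unfolding Spec_def by (simp add: primeideal_def ideal_def additive_subgroup.a_subset)

abbreviation nonvanishing_locus :: "('a, 'm) ring_scheme \<Rightarrow> 'a set \<Rightarrow> 'a set set"
  where "nonvanishing_locus R S \<equiv> Spec R - {P \<in> Spec R. S \<subseteq> P}"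

lemma openin_Zariski_iff:
  "openin (Zariski R) U \<longleftrightarrow> (\<exists>S\<subseteq>carrier R. U = nonvanishing_locus R S)"
  by (simp add: openin_Zariski zariski_open_def)

lemma topspace_Zariski: "topspace (Zariski R) = Spec R"
proof
  show "topspace (Zariski R) \<subseteq> Spec R"
    using openin_topspace[of "Zariski R"] unfolding openin_Zariski_iff by blast
  have "\<not> carrier R \<subseteq> P" if "P \<in> Spec R" for P
  proof -
    interpret primeideal P R using that by (simp add: Spec_def)
    show ?thesis using I_notcarr a_subset by blast
  qed
  then have "openin (Zariski R) (Spec R)"
    unfolding openin_Zariski_iff by (intro exI[of _ "carrier R"]) blast
  then show "Spec R \<subseteq> topspace (Zariski R)"
    by (rule openin_subset)
qed

locale cring_subring = cring B for B (structure) +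
  fixes A assumes subring: "subring A B"
begin

abbreviation A_ring where "A_ring \<equiv> B\<lparr>carrier := A\<rparr>"

lemma subring_subset: "A \<subseteq> carrier B"
  using subringE(1)[OF subring] .

lemma nat_pow_in_subring: "s \<in> A \<Longrightarrow> s [^] (n::nat) \<in> A"
  by (induction n) (simp_all add: subringE(3,6)[OF subring])

lemma Spec_contraction:
  assumes "P \<in> Spec B"
  shows "P \<inter> A \<in> Spec A_ring"
proof -
  have "cring A_ring"
    using subcring_iff[OF subring_subset] subcringI'[OF subring] by blast
  moreover have "ring_hom_ring A_ring B id"
    using subring_is_ring[OF subring] subring_subset
    by (intro ring_hom_ringI2 ring_axioms ring_hom_memI) auto
  ultimately have "primeideal {r \<in> A. id r \<in> P} A_ring"
    using ring_hom_ring.primeideal_vimage assms unfolding Spec_def by fastforce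
  then show ?thesis
    unfolding Spec_def by (simp add: Int_commute Collect_conj_eq)
qed

lemma continuous_map_contraction:
  "continuous_map (Zariski B) (Zariski A_ring) (\<lambda>P. P \<inter> A)"
  unfolding continuous_map_def topspace_Zariski
proof (intro conjI allI impI)
  show "(\<lambda>P. P \<inter> A) \<in> Spec B \<rightarrow> Spec A_ring"
    using Spec_contraction by blast
  fix U assume "openin (Zariski A_ring) U"
  then obtain S where S: "S \<subseteq> A" "U = nonvanishing_locus A_ring S"
    unfolding openin_Zariski_iff by auto
  then have "{P \<in> Spec B. P \<inter> A \<in> U} = nonvanishing_locus B S"
    using Spec_contraction by blast
  then show "openin (Zariski B) {P \<in> Spec B. P \<inter> A \<in> U}"
    unfolding openin_Zariski_iff using S(1) subring_subset by blast
qed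

lemma dense_image_contraction:
  "Zariski A_ring closure_of ((\<lambda>P. P \<inter> A) ` Spec B) = Spec A_ring"
proof (rule antisym)
  show "Zariski A_ring closure_of ((\<lambda>P. P \<inter> A) ` Spec B) \<subseteq> Spec A_ring"
    using closure_of_subset_topspace by (metis topspace_Zariski)
  show "Spec A_ring \<subseteq> Zariski A_ring closure_of ((\<lambda>P. P \<inter> A) ` Spec B)"
    unfolding in_closure_of topspace_Zariski subset_iff
  proof (intro allI impI conjI)
    fix Q U assume Q: "Q \<in> Spec A_ring" and U: "Q \<in> U \<and> openin (Zariski A_ring) U"
    then obtain S where S: "S \<subseteq> A" "U = nonvanishing_locus A_ring S"
      unfolding openin_Zariski_iff by auto
    then obtain s where s: "s \<in> S" "s \<notin> Q" using U by blast
    interpret Q: primeideal Q A_ring using Q by (simp add: Spec_def)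
    \<comment> \<open>A nilpotent s would lie in every prime of A.\<close>
    have "s \<notin> rad B {\<zero>}"
    proof
      assume "s \<in> rad B {\<zero>}"
      then obtain n :: nat where "s [^] n = \<zero>" unfolding rad_def by blast
      moreover have "s [^]\<^bsub>A_ring\<^esub> n = s [^] n"
        by (simp add: nat_pow_def)
      ultimately have "s [^]\<^bsub>A_ring\<^esub> n \<in> Q"
        using additive_subgroup.zero_closed[OF Q.is_additive_subgroup] by simp
      then show False using Q.nat_pow_mem_imp_mem s S(1) by auto
    qed
    moreover have "s \<in> carrier B"
      using s(1) S(1) subring_subset by blast
    ultimately obtain P where P: "P \<in> Spec B" "s \<notin> P"
      using exists_Spec_not_in_rad[OF zeroideal] by blast
    then have "P \<inter> A \<in> U"
      using Spec_contraction[OF P(1)] S(2) s(1) by blast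
    then show "\<exists>y. y \<in> (\<lambda>P. P \<inter> A) ` Spec B \<and> y \<in> U"
      using P(1) by blast
  qed
qed

lemma dense_subring_subset_Spec_iff:
  assumes dense: "dense_subring A B" and Q: "Q \<in> Spec B" and T: "T \<subseteq> carrier B"
  shows "T \<subseteq> Q \<longleftrightarrow> A \<inter> {a \<otimes> b | a b. a \<in> carrier B \<and> b \<in> T} \<subseteq> Q"
proof
  interpret Q: primeideal Q B using Q by (simp add: Spec_def)
  show "A \<inter> {a \<otimes> b | a b. a \<in> carrier B \<and> b \<in> T} \<subseteq> Q" if "T \<subseteq> Q"
    using that Q.I_l_closed by blast
  assume sub: "A \<inter> {a \<otimes> b | a b. a \<in> carrier B \<and> b \<in> T} \<subseteq> Q"
  show "T \<subseteq> Q"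
  proof (rule ccontr)
    assume "\<not> T \<subseteq> Q"
    then obtain b where b: "b \<in> T" "b \<notin> Q" by blast
    then obtain a where a: "a \<in> carrier B" "a \<notin> Q" "a \<otimes> b \<in> A"
      using dense[unfolded dense_subring_def, rule_format, OF Q.is_ideal, of b] T
      by (auto simp: Q.rad_eq)
    then have "a \<otimes> b \<in> Q" using sub b(1) by blast
    then show False using Q.I_prime a(1,2) b T by blast
  qed
qed

lemma dense_subring_inj_on_contraction:
  assumes "dense_subring A B"
  shows "inj_on (\<lambda>P. P \<inter> A) (Spec B)"
proof -
  have "P \<subseteq> Q" if P: "P \<in> Spec B" and Q: "Q \<in> Spec B" and eq: "P \<inter> A = Q \<inter> A" for P Q
  proof -
    let ?S = "A \<inter> {a \<otimes> b | a b. a \<in> carrier B \<and> b \<in> P}"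
    have P_carrier: "P \<subseteq> carrier B"
      by (rule Spec_subset_carrier[OF P])
    then have "?S \<subseteq> P"
      using dense_subring_subset_Spec_iff[OF assms P P_carrier] by simp
    then have "?S \<subseteq> Q \<inter> A"
      unfolding eq[symmetric] by auto
    then show ?thesis
      using dense_subring_subset_Spec_iff[OF assms Q P_carrier] by auto
  qed
  then show ?thesis
    by (intro inj_onI) (metis subset_antisym)
qed

lemma dense_subring_image_nonvanishing_locus:
  assumes "dense_subring A B" and "T \<subseteq> carrier B"
  defines "S \<equiv> A \<inter> {a \<otimes> b | a b. a \<in> carrier B \<and> b \<in> T}"
  shows "(\<lambda>P. P \<inter> A) ` nonvanishing_locus B T
    = nonvanishing_locus A_ring S \<inter> (\<lambda>P. P \<inter> A) ` Spec B"
proof -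
  have iff: "T \<subseteq> P \<longleftrightarrow> S \<subseteq> P \<inter> A" if "P \<in> Spec B" for P
    using dense_subring_subset_Spec_iff[OF assms(1) that assms(2)] unfolding S_def by blast
  show ?thesis
  proof (intro equalityI subsetI)
    fix Q assume "Q \<in> (\<lambda>P. P \<inter> A) ` nonvanishing_locus B T"
    then obtain P where P: "P \<in> Spec B" "\<not> T \<subseteq> P" and Q: "Q = P \<inter> A" by blast
    then have "Q \<in> Spec A_ring" "\<not> S \<subseteq> Q"
      using Spec_contraction iff by simp_all
    then show "Q \<in> nonvanishing_locus A_ring S \<inter> (\<lambda>P. P \<inter> A) ` Spec B"
      using P(1) Q by blast
  next
    fix Q assume "Q \<in> nonvanishing_locus A_ring S \<inter> (\<lambda>P. P \<inter> A) ` Spec B"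
    then obtain P where "P \<in> Spec B" "\<not> S \<subseteq> Q" and Q: "Q = P \<inter> A" by blast
    then have "P \<in> nonvanishing_locus B T"
      using iff by simp
    then show "Q \<in> (\<lambda>P. P \<inter> A) ` nonvanishing_locus B T"
      using Q by blast
  qed
qed

lemma dense_subring_embedding_map_contraction:
  assumes "dense_subring A B"
  shows "embedding_map (Zariski B) (Zariski A_ring) (\<lambda>P. P \<inter> A)"
proof (rule embedding_mapI[OF continuous_map_contraction])
  show "inj_on (\<lambda>P. P \<inter> A) (topspace (Zariski B))"
    unfolding topspace_Zariski using dense_subring_inj_on_contraction[OF assms] .
  fix U assume "openin (Zariski B) U"
  then obtain T where T: "T \<subseteq> carrier B" and U: "U = nonvanishing_locus B T"
    unfolding openin_Zariski_iff by blast
  define S where "S = A \<inter> {a \<otimes> b | a b. a \<in> carrier B \<and> b \<in> T}"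
  have "openin (Zariski A_ring) (nonvanishing_locus A_ring S)"
    unfolding openin_Zariski_iff S_def by auto
  then show "\<exists>V. openin (Zariski A_ring) V \<and>
      (\<lambda>P. P \<inter> A) ` U = V \<inter> (\<lambda>P. P \<inter> A) ` topspace (Zariski B)"
    using dense_subring_image_nonvanishing_locus[OF assms T] unfolding U S_def topspace_Zariski by blast
qed

lemma embedding_map_contraction_radical_witness:
  assumes emb: "embedding_map (Zariski B) (Zariski A_ring) (\<lambda>P. P \<inter> A)"
    and b: "b \<in> carrier B" and P: "P \<in> Spec B" "b \<notin> P"
  obtains s where "s \<in> A" "s \<notin> P" "s \<in> rad B (PIdl b)"
proof -
  define W where "W = nonvanishing_locus B {b}"
  have "openin (Zariski B) W"
    unfolding openin_Zariski_iff W_def using b by (intro exI[of _ "{b}"]) simp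
  from embedding_map_imp_open_image[OF emb this]
  obtain V where "openin (Zariski A_ring) V"
    and image_W: "(\<lambda>P. P \<inter> A) ` W = V \<inter> (\<lambda>P. P \<inter> A) ` Spec B"
    unfolding topspace_Zariski .
  then obtain S where S: "S \<subseteq> A" "V = nonvanishing_locus A_ring S"
    unfolding openin_Zariski_iff by auto
  have "P \<in> W"
    using P by (simp add: W_def)
  then have "P \<inter> A \<in> V"
    using image_W by blast
  then obtain s where s: "s \<in> S" "s \<notin> P"
    using S by blast
  have inj: "inj_on (\<lambda>P. P \<inter> A) (Spec B)"
    using embedding_map_imp_inj_on[OF emb] unfolding topspace_Zariski .
  \<comment> \<open>By injectivity, every prime containing b contracts outside V, hence contains s.\<close>
  have "s \<in> Q" if Q: "Q \<in> Spec B" "PIdl b \<subseteq> Q" for Q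
  proof (rule ccontr)
    assume "s \<notin> Q"
    then have "\<not> S \<subseteq> Q \<inter> A"
      using s(1) by blast
    then have "Q \<inter> A \<in> V"
      using S(2) Spec_contraction[OF Q(1)] by simp
    then have "Q \<inter> A \<in> (\<lambda>P. P \<inter> A) ` W"
      unfolding image_W using Q(1) by blast
    then obtain Q' where Q': "Q' \<in> W" "Q' \<inter> A = Q \<inter> A"
      by (auto simp: image_iff)
    moreover have "Q' \<in> Spec B" "b \<notin> Q'"
      using Q'(1) by (simp_all add: W_def)
    ultimately have "b \<notin> Q"
      using inj_onD[OF inj Q'(2)] Q(1) by simp
    then show False
      using Q(2) cgenideal_self[OF b] by blast
  qed
  moreover have "s \<in> carrier B"
    using s(1) S(1) subring_subset by blast
  ultimately have "s \<in> rad B (PIdl b)"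
    using exists_Spec_not_in_rad[OF cgenideal_ideal[OF b]] by blast
  then show thesis
    using that s S(1) by blast
qed

lemma embedding_map_contraction_imp_dense_subring:
  assumes emb: "embedding_map (Zariski B) (Zariski A_ring) (\<lambda>P. P \<inter> A)"
  shows "dense_subring A B"
  unfolding dense_subring_def
proof (intro allI impI)
  fix I b assume "ideal I B" and b: "b \<in> carrier B" and "b \<notin> rad B I"
  then obtain P where P: "P \<in> Spec B" "I \<subseteq> P" "b \<notin> P"
    using exists_Spec_not_in_rad by blast
  interpret P: primeideal P B using P(1) by (simp add: Spec_def)
  obtain s where s: "s \<in> A" "s \<notin> P" "s \<in> rad B (PIdl b)"
    using embedding_map_contraction_radical_witness[OF emb b P(1,3)] .
  then obtain n :: nat and c where c: "c \<in> carrier B" "s [^] n = c \<otimes> b"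
    unfolding rad_def cgenideal_def by blast
  have "s [^] n \<notin> P"
    using P.nat_pow_mem_imp_mem s(1,2) subring_subset by blast
  then have "c \<notin> P"
    using c P.I_r_closed[OF _ b] by auto
  then have "c \<notin> rad B I"
    using P(2) P.rad_eq unfolding rad_def by blast
  moreover have "c \<otimes> b \<in> A"
    using nat_pow_in_subring[OF s(1), of n] unfolding c(2) .
  ultimately show "\<exists>a\<in>carrier B. a \<notin> rad B I \<and> a \<otimes> b \<in> A"
    using c(1) by blast
qed

end

theorem corollary4p2:
  fixes B :: "('a, 'm) ring_scheme" and A :: "'a set"
  assumes "cring B" and "subring A B"
  shows "dense_subring A B \<longleftrightarrow>
    (embedding_map (Zariski B) (Zariski (B\<lparr>carrier := A\<rparr>)) (\<lambda>P. P \<inter> A) \<and>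
     (Zariski (B\<lparr>carrier := A\<rparr>)) closure_of ((\<lambda>P. P \<inter> A) ` topspace (Zariski B))
       = topspace (Zariski (B\<lparr>carrier := A\<rparr>)))"
proof -
  interpret cring_subring B A
    using assms by (intro cring_subring.intro cring_subring_axioms.intro)
  show ?thesis
    unfolding topspace_Zariski
    using dense_image_contraction dense_subring_embedding_map_contraction
      embedding_map_contraction_imp_dense_subring
    by blast
qed

end
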